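(* In the following setting: $\mathcal{W}$ is the weight space of an MLP, $G$ its neuron-permutation group acting orthonormally on $\mathcal{W}$ (see context), $p(\boldsymbol{\omega})$ a $G$-invariant prior density, $p(\mathbf{Y}\mid\mathbf{X},\boldsymbol{\omega})$ a likelihood that is $G$-invariant in $\boldsymbol{\omega}$, $q_\theta$ a variational density on $\mathcal{W}$ with symmetrization $q_\theta^G(\boldsymbol{\omega})=\frac{1}{|G|}\sum_{g\in G}q_\theta(g^{-1}\cdot\boldsymbol{\omega})$, and $$\mathcal{L}_{\mathrm{VI}}(\theta)=\mathbb{E}_{q_\theta}\log p(\mathbf{Y}\mid\mathbf{X},\boldsymbol{\omega})-\mathrm{KL}(q_\theta\|p),\quad \mathcal{L}^G_{\mathrm{VI}}(\theta)=\mathbb{E}_{q^G_\theta}\log p(\mathbf{Y}\mid\mathbf{X},\boldsymbol{\omega})-\mathrm{KL}(q^G_\theta\|p)$$ (all assumed finite). Then for every variational parameter $\theta$, $\mathcal{L}^G_{\mathrm{VI}}(\theta)\ge\mathcal{L}_{\mathrm{VI}}(\theta)$, with equality if and only if $q_\theta$ is $G$-invariant.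
   Context: The MLP weight space is $\mathcal{W}=\bigoplus_{l=1}^L(\mathbb{R}^{d_l\times d_{l-1}}\oplus\mathbb{R}^{d_l})$ with $\boldsymbol{\omega}=(\mathbf{W}_1,\dots,\mathbf{W}_L,\mathbf{b}_1,\dots,\mathbf{b}_L)$ and Euclidean norm, and $G=S_{d_1}\times\dots\times S_{d_{L-1}}$. For $g=(\tau_1,\dots,\tau_{L-1})$ with permutation matrices $\mathbf{P}_{\tau_l}$, $g\cdot\boldsymbol{\omega}$ has $\mathbf{W}_1'=\mathbf{P}_{\tau_1}^\top\mathbf{W}_1$, $\mathbf{b}_1'=\mathbf{P}_{\tau_1}^\top\mathbf{b}_1$; $\mathbf{W}_l'=\mathbf{P}_{\tau_l}^\top\mathbf{W}_l\mathbf{P}_{\tau_{l-1}}$, $\mathbf{b}_l'=\mathbf{P}_{\tau_l}^\top\mathbf{b}_l$ for $2\le l\le L-1$; $\mathbf{W}_L'=\mathbf{W}_L\mathbf{P}_{\tau_{L-1}}$, $\mathbf{b}_L'=\mathbf{b}_L$. A density $h$ is $G$-invariant if $h(g\cdot\boldsymbol{\omega})=h(\boldsymbol{\omega})$ for all $g,\boldsymbol{\omega}$ (densities identified up to null sets). *)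

theory Defs
  imports "HOL-Probability.Probability" "HOL-Combinatorics.Permutations"
begin

text \<open>Layers are numbered 1..L;
  d l is the width of layer l (d 0 = input dimension).
  Wc l i j is entry (i,j) of W_l (i < d l, j < d (l-1));  Bc l i is entry i of b_l.\<close>
datatype coord = Wc nat nat nat | Bc nat nat

definition mlp_coords :: "(nat \<Rightarrow> nat) \<Rightarrow> nat \<Rightarrow> coord set" where
  "mlp_coords d L =
     {Wc l i j | l i j. 1 \<le> l \<and> l \<le> L \<and> i < d l \<and> j < d (l - 1)}
   \<union> {Bc l i | l i. 1 \<le> l \<and> l \<le> L \<and> i < d l}"

definition weight_space :: "(nat \<Rightarrow> nat) \<Rightarrow> nat \<Rightarrow> (coord \<Rightarrow> real) measure" where
  "weight_space d L = PiM (mlp_coords d L) (\<lambda>_. lborel)"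

text \<open>The group G = S_{d_1} x ... x S_{d_{L-1}}: g l is a permutation of {..<d l} for
  1 \<le> l \<le> L-1, and the identity for all other l (in particular tau_0 = tau_L = id).\<close>
definition perm_group :: "(nat \<Rightarrow> nat) \<Rightarrow> nat \<Rightarrow> (nat \<Rightarrow> nat \<Rightarrow> nat) set" where
  "perm_group d L = {g. \<forall>l. g l permutes (if 1 \<le> l \<and> l < L then {..<d l} else {})}"

definition grp_inv :: "(nat \<Rightarrow> nat \<Rightarrow> nat) \<Rightarrow> (nat \<Rightarrow> nat \<Rightarrow> nat)" where
  "grp_inv g = (\<lambda>l. inv (g l))"

text \<open>Action: W_l' = P_{tau_l}^T W_l P_{tau_{l-1}}, b_l' = P_{tau_l}^T b_l, with
  P_tau e_j = e_{tau j}, i.e. (W_l')_{ij} = (W_l)_{tau_l i, tau_{l-1} j}, (b_l')_i = (b_l)_{tau_l i}.\<close>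
definition act :: "(nat \<Rightarrow> nat) \<Rightarrow> nat \<Rightarrow> (nat \<Rightarrow> nat \<Rightarrow> nat) \<Rightarrow> (coord \<Rightarrow> real) \<Rightarrow> (coord \<Rightarrow> real)" where
  "act d L g \<omega> = restrict (\<lambda>c. case c of
       Wc l i j \<Rightarrow> \<omega> (Wc l (g l i) (g (l - 1) j))
     | Bc l i \<Rightarrow> \<omega> (Bc l (g l i))) (mlp_coords d L)"

definition is_density :: "(coord \<Rightarrow> real) measure \<Rightarrow> ((coord \<Rightarrow> real) \<Rightarrow> real) \<Rightarrow> bool" where
  "is_density M h \<longleftrightarrow> h \<in> borel_measurable M \<and> (\<forall>\<omega>\<in>space M. 0 \<le> h \<omega>)
      \<and> (\<integral>\<^sup>+ \<omega>. ennreal (h \<omega>) \<partial>M) = 1"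

definition G_invariant :: "(nat \<Rightarrow> nat) \<Rightarrow> nat \<Rightarrow> ((coord \<Rightarrow> real) \<Rightarrow> real) \<Rightarrow> bool" where
  "G_invariant d L h \<longleftrightarrow>
     (\<forall>g\<in>perm_group d L. AE \<omega> in weight_space d L. h (act d L g \<omega>) = h \<omega>)"

definition symmetrize :: "(nat \<Rightarrow> nat) \<Rightarrow> nat \<Rightarrow> ((coord \<Rightarrow> real) \<Rightarrow> real) \<Rightarrow> ((coord \<Rightarrow> real) \<Rightarrow> real)" where
  "symmetrize d L q = (\<lambda>\<omega>. (1 / real (card (perm_group d L))) *
       (\<Sum>g\<in>perm_group d L. q (act d L (grp_inv g) \<omega>)))"

text \<open>KL(q || p) = \<integral> q log (q/p)  (with 0 log 0 = 0).\<close>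
definition KL :: "(coord \<Rightarrow> real) measure \<Rightarrow> ((coord \<Rightarrow> real) \<Rightarrow> real) \<Rightarrow> ((coord \<Rightarrow> real) \<Rightarrow> real) \<Rightarrow> real" where
  "KL M q p = (\<integral>\<omega>. q \<omega> * ln (q \<omega> / p \<omega>) \<partial>M)"

definition ELBO :: "(coord \<Rightarrow> real) measure \<Rightarrow> ((coord \<Rightarrow> real) \<Rightarrow> real) \<Rightarrow> ((coord \<Rightarrow> real) \<Rightarrow> real)
     \<Rightarrow> ((coord \<Rightarrow> real) \<Rightarrow> real) \<Rightarrow> real" where
  "ELBO M lik p q = (\<integral>\<omega>. q \<omega> * ln (lik \<omega>) \<partial>M) - KL M q p"

definition finite_terms :: "(coord \<Rightarrow> real) measure \<Rightarrow> ((coord \<Rightarrow> real) \<Rightarrow> real) \<Rightarrow> ((coord \<Rightarrow> real) \<Rightarrow> real)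
     \<Rightarrow> ((coord \<Rightarrow> real) \<Rightarrow> real) \<Rightarrow> bool" where
  "finite_terms M lik p q \<longleftrightarrow>
     integrable M (\<lambda>\<omega>. q \<omega> * ln (lik \<omega>)) \<and>
     (AE \<omega> in M. p \<omega> = 0 \<longrightarrow> q \<omega> = 0) \<and>
     integrable M (\<lambda>\<omega>. q \<omega> * ln (q \<omega> / p \<omega>))"

end

theory Submission
  imports Defs
begin

(* Each permutation
   of the weight coordinates preserves Lebesgue measure and fixes the prior and the likelihood
   almost everywhere, so every translate of q has the same expected log-likelihood and the same
   relative entropy with respect to p as q itself.  The expected log-likelihood is linear in q,
   hence unchanged by averaging, while x ln (x / p) is convex in x: by Jensen's inequality at each
   point, KL(q^G || p) \<le> KL(q || p), with equality only where all translates of q agree, i.e.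
   only if q is G-invariant. *)

lemma diff_le_mult_ln_div:
  fixes x m :: real
  assumes "0 \<le> x" "0 < m"
  shows "x - m \<le> x * ln (x / m)"
proof (cases "x = 0")
  case False
  with assms have x: "0 < x" by simp
  have "x * ln (m / x) \<le> x * (m / x - 1)"
    using ln_le_minus_one[of "m / x"] x assms by (simp add: mult_left_mono)
  also have "\<dots> = m - x" using x by (simp add: field_simps)
  finally show ?thesis using x assms by (simp add: ln_div right_diff_distrib)
qed (use assms in simp)

lemma mult_ln_div_eq_diff_iff:
  fixes x m :: real
  assumes "0 \<le> x" "0 < m"
  shows "x * ln (x / m) = x - m \<longleftrightarrow> x = m"
proof (cases "x = 0")
  case False
  with assms have x: "0 < x" by simp
  have "x * ln (x / m) = x - m \<longleftrightarrow> ln (m / x) = m / x - 1"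
    using x assms by (auto simp: ln_div field_simps)
  also have "\<dots> \<longleftrightarrow> x = m"
    using ln_eq_minus_one[of "m / x"] x assms by auto
  finally show ?thesis .
qed (use assms in auto)

(* Convexity gap of x ln (x / c) around the mean m: a sum of Bregman terms, each
   nonnegative by diff_le_mult_ln_div. *)
lemma sum_mult_ln_div_eq_mean:
  fixes x :: "'g \<Rightarrow> real"
  assumes G: "finite G" and x: "\<And>g. g \<in> G \<Longrightarrow> 0 \<le> x g" and m: "0 < m" and c: "0 < c"
    and sum: "(\<Sum>g\<in>G. x g) = real (card G) * m"
  shows "(\<Sum>g\<in>G. x g * ln (x g / c))
       = real (card G) * (m * ln (m / c)) + (\<Sum>g\<in>G. x g * ln (x g / m) - (x g - m))"
proof -
  have split: "x g * ln (x g / c) = (x g * ln (x g / m) - (x g - m)) + (x g - m) + x g * ln (m / c)"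
    if "g \<in> G" for g
    using x[OF that] m c by (cases "x g = 0") (auto simp: ln_div algebra_simps)
  have "(\<Sum>g\<in>G. x g * ln (x g / c))
      = (\<Sum>g\<in>G. x g * ln (x g / m) - (x g - m)) + ((\<Sum>g\<in>G. x g) - real (card G) * m)
        + (\<Sum>g\<in>G. x g) * ln (m / c)"
    by (simp add: sum.cong[OF refl split] sum.distrib sum_subtractf sum_distrib_right)
  then show ?thesis by (simp add: sum)
qed

lemma mean_eq_0_imp_all_0:
  fixes x :: "'g \<Rightarrow> real"
  assumes "finite G" "\<And>g. g \<in> G \<Longrightarrow> 0 \<le> x g" "(1 / real (card G)) * (\<Sum>g\<in>G. x g) = 0"
  shows "\<forall>g\<in>G. x g = 0"
proof (cases "G = {}")
  case False
  with assms have "(\<Sum>g\<in>G. x g) = 0" by simp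
  then show ?thesis using assms sum_nonneg_eq_0_iff by blast
qed simp

lemma mult_ln_div_mean_le:
  fixes x :: "'g \<Rightarrow> real"
  assumes G: "finite G" "G \<noteq> {}" and x: "\<And>g. g \<in> G \<Longrightarrow> 0 \<le> x g" and c: "0 \<le> c"
  defines "m \<equiv> (1 / real (card G)) * (\<Sum>g\<in>G. x g)"
  shows "m * ln (m / c) \<le> (1 / real (card G)) * (\<Sum>g\<in>G. x g * ln (x g / c))"
proof -
  have N: "0 < real (card G)" using G by (simp add: card_gt_0_iff)
  have "0 \<le> m" unfolding m_def using x by (simp add: sum_nonneg)
  with c consider "m = 0" | "c = 0" | "0 < m" "0 < c" by linarith
  then show ?thesis
  proof cases
    case 1
    then have "\<forall>g\<in>G. x g = 0" using mean_eq_0_imp_all_0[of G x] G(1) x unfolding m_def by blast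
    with 1 show ?thesis by simp
  next
    case 2
    then show ?thesis by simp
  next
    case 3
    have "0 \<le> (\<Sum>g\<in>G. x g * ln (x g / m) - (x g - m))"
      using diff_le_mult_ln_div[OF x \<open>0 < m\<close>] by (simp add: sum_nonneg)
    then show ?thesis
      using sum_mult_ln_div_eq_mean[OF G(1) x 3] N by (simp add: m_def field_simps)
  qed
qed

(* At c = 0 both sides vanish (x / 0 = 0 and ln 0 = 0), whence the hypothesis c0. *)
lemma mult_ln_div_mean_eq_imp_const:
  fixes x :: "'g \<Rightarrow> real"
  assumes G: "finite G" "G \<noteq> {}" and x: "\<And>g. g \<in> G \<Longrightarrow> 0 \<le> x g" and c: "0 \<le> c"
  defines "m \<equiv> (1 / real (card G)) * (\<Sum>g\<in>G. x g)"
  assumes eq: "m * ln (m / c) = (1 / real (card G)) * (\<Sum>g\<in>G. x g * ln (x g / c))"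
    and c0: "c = 0 \<Longrightarrow> m = 0"
  shows "\<forall>g\<in>G. x g = m"
proof (cases "m = 0")
  case True
  then have "\<forall>g\<in>G. x g = 0" using mean_eq_0_imp_all_0[of G x] G(1) x unfolding m_def by blast
  with True show ?thesis by simp
next
  case False
  have N: "0 < real (card G)" using G by (simp add: card_gt_0_iff)
  have "0 \<le> m" unfolding m_def using x by (simp add: sum_nonneg)
  with False have m: "0 < m" by simp
  with c c0 have "0 < c" by fastforce
  define e where "e g = x g * ln (x g / m) - (x g - m)" for g
  have e_nonneg: "\<And>g. g \<in> G \<Longrightarrow> 0 \<le> e g"
    unfolding e_def using diff_le_mult_ln_div[OF x m] by simp
  have "sum e G = 0"
    using sum_mult_ln_div_eq_mean[OF G(1) x m \<open>0 < c\<close>] eq N unfolding e_def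
    by (simp add: m_def field_simps)
  then have e0: "\<forall>g\<in>G. e g = 0" using sum_nonneg_eq_0_iff[OF G(1) e_nonneg] by simp
  show ?thesis
  proof
    fix g assume g: "g \<in> G"
    with e0 have "x g * ln (x g / m) = x g - m" unfolding e_def by simp
    then show "x g = m" using mult_ln_div_eq_diff_iff[OF x[OF g] m] by simp
  qed
qed

definition measure_preserving :: "'a measure \<Rightarrow> ('a \<Rightarrow> 'a) \<Rightarrow> bool" where
  "measure_preserving M T \<longleftrightarrow> T \<in> M \<rightarrow>\<^sub>M M \<and> distr M M T = M"

lemma measure_preserving_PiM_reindex:
  fixes M :: "'b measure" and \<sigma> :: "'i \<Rightarrow> 'i"
  assumes M: "sigma_finite_measure M" and I: "finite I" and \<sigma>: "bij_betw \<sigma> I I"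
  shows "measure_preserving (\<Pi>\<^sub>M i\<in>I. M) (\<lambda>\<omega>. \<lambda>i\<in>I. \<omega> (\<sigma> i))"
proof -
  interpret product_sigma_finite "\<lambda>_. M" unfolding product_sigma_finite_def using M by simp
  let ?P = "\<Pi>\<^sub>M i\<in>I. M" and ?T = "\<lambda>\<omega>. \<lambda>i\<in>I. \<omega> (\<sigma> i)" and ?\<tau> = "inv_into I \<sigma>"
  have \<tau>: "?\<tau> j \<in> I" "\<sigma> (?\<tau> j) = j" if "j \<in> I" for j
    using \<sigma> that by (auto simp: bij_betw_def inv_into_into f_inv_into_f)
  have \<sigma>I: "\<sigma> i \<in> I" "?\<tau> (\<sigma> i) = i" if "i \<in> I" for i
    using \<sigma> that by (auto simp: bij_betw_def)
  have meas: "?T \<in> ?P \<rightarrow>\<^sub>M ?P"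
    using \<sigma> by (intro measurable_restrict measurable_component_singleton) (auto simp: bij_betw_def)
  have "distr ?P ?P ?T = ?P"
  proof (rule PiM_eqI[OF I])
    fix A assume A: "\<And>i. i \<in> I \<Longrightarrow> A i \<in> sets M"
    have "?T -` Pi\<^sub>E I A \<inter> space ?P = {\<omega> \<in> space ?P. \<forall>i\<in>I. \<omega> (\<sigma> i) \<in> A i}"
      by (auto simp: PiE_iff)
    also have "\<dots> = {\<omega> \<in> space ?P. \<forall>j\<in>I. \<omega> j \<in> A (?\<tau> j)}"
      using \<tau> \<sigma>I by metis
    also have "\<dots> = Pi\<^sub>E I (\<lambda>j. A (?\<tau> j))"
      using \<tau>(1) A[THEN sets.sets_into_space] by (auto simp: space_PiM PiE_iff extensional_def)
    finally have "?T -` Pi\<^sub>E I A \<inter> space ?P = Pi\<^sub>E I (\<lambda>j. A (?\<tau> j))" .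
    then have "emeasure (distr ?P ?P ?T) (Pi\<^sub>E I A) = (\<Prod>j\<in>I. emeasure M (A (?\<tau> j)))"
      using A I \<tau> by (simp add: emeasure_distr[OF meas] sets_PiM_I_finite emeasure_PiM)
    also have "\<dots> = (\<Prod>i\<in>I. emeasure M (A i))"
      using \<sigma> \<tau> by (intro prod.reindex_bij_betw[of ?\<tau>]) (auto intro: bij_betw_inv_into)
    finally show "emeasure (distr ?P ?P ?T) (Pi\<^sub>E I A) = (\<Prod>i\<in>I. emeasure M (A i))" .
  qed simp
  with meas show ?thesis unfolding measure_preserving_def by blast
qed

lemma measure_preserving_integral:
  fixes f :: "'a \<Rightarrow> 'b::{banach, second_countable_topology}"
  assumes T: "measure_preserving M T" and f: "integrable M f"
  shows "integrable M (\<lambda>\<omega>. f (T \<omega>))" and "(\<integral>\<omega>. f (T \<omega>) \<partial>M) = integral\<^sup>L M f"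
proof -
  have T_meas: "T \<in> M \<rightarrow>\<^sub>M M" and T_distr: "distr M M T = M"
    using T unfolding measure_preserving_def by auto
  have f_meas: "f \<in> borel_measurable M" using f by simp
  show "integrable M (\<lambda>\<omega>. f (T \<omega>))"
    using f integrable_distr_eq[OF T_meas f_meas] by (simp add: T_distr)
  show "(\<integral>\<omega>. f (T \<omega>) \<partial>M) = integral\<^sup>L M f"
    using integral_distr[OF T_meas f_meas] by (simp add: T_distr)
qed

definition orbit_average :: "'g set \<Rightarrow> ('g \<Rightarrow> 'a \<Rightarrow> 'a) \<Rightarrow> ('a \<Rightarrow> real) \<Rightarrow> 'a \<Rightarrow> real" where
  "orbit_average G T f \<omega> = (1 / real (card G)) * (\<Sum>g\<in>G. f (T g \<omega>))"

lemma
  assumes G: "finite G" "G \<noteq> {}" and T: "\<And>g. g \<in> G \<Longrightarrow> measure_preserving M (T g)"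
    and f: "integrable M f"
  shows integrable_orbit_average: "integrable M (orbit_average G T f)"
    and integral_orbit_average: "integral\<^sup>L M (orbit_average G T f) = integral\<^sup>L M f"
proof -
  show "integrable M (orbit_average G T f)"
    unfolding orbit_average_def using measure_preserving_integral(1)[OF T f] by auto
  have "integral\<^sup>L M (orbit_average G T f) = (1 / real (card G)) * (\<Sum>g\<in>G. integral\<^sup>L M f)"
    unfolding orbit_average_def using measure_preserving_integral[OF T f] by (simp add: integral_sum)
  then show "integral\<^sup>L M (orbit_average G T f) = integral\<^sup>L M f"
    using G by simp
qed

(* As h is invariant, each summand agrees a.e. with the translate by T g of the integrand,
   whose integral is unchanged. *)
lemma
  fixes \<Phi> :: "real \<Rightarrow> real \<Rightarrow> real"
  assumes G: "finite G" "G \<noteq> {}" and T: "\<And>g. g \<in> G \<Longrightarrow> measure_preserving M (T g)"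
    and \<Phi>: "case_prod \<Phi> \<in> borel_measurable borel"
    and q: "q \<in> borel_measurable M" and h: "h \<in> borel_measurable M"
    and h_inv: "\<And>g. g \<in> G \<Longrightarrow> AE \<omega> in M. h (T g \<omega>) = h \<omega>"
    and int: "integrable M (\<lambda>\<omega>. \<Phi> (q \<omega>) (h \<omega>))"
  shows integrable_orbit_average_invariant:
      "integrable M (\<lambda>\<omega>. (1 / real (card G)) * (\<Sum>g\<in>G. \<Phi> (q (T g \<omega>)) (h \<omega>)))"
    and integral_orbit_average_invariant:
      "(\<integral>\<omega>. (1 / real (card G)) * (\<Sum>g\<in>G. \<Phi> (q (T g \<omega>)) (h \<omega>)) \<partial>M)
         = (\<integral>\<omega>. \<Phi> (q \<omega>) (h \<omega>) \<partial>M)"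
proof -
  let ?F = "\<lambda>\<omega>. (1 / real (card G)) * (\<Sum>g\<in>G. \<Phi> (q (T g \<omega>)) (h \<omega>))"
  have "AE \<omega> in M. \<forall>g\<in>G. h (T g \<omega>) = h \<omega>" by (rule AE_finite_allI[OF G(1) h_inv])
  then have ae: "AE \<omega> in M. ?F \<omega> = orbit_average G T (\<lambda>\<omega>. \<Phi> (q \<omega>) (h \<omega>)) \<omega>"
    by eventually_elim (simp add: orbit_average_def)
  have T_meas: "T g \<in> M \<rightarrow>\<^sub>M M" if "g \<in> G" for g
    using T[OF that] unfolding measure_preserving_def by blast
  have "(\<lambda>\<omega>. \<Phi> (q (T g \<omega>)) (h \<omega>)) \<in> borel_measurable M" if "g \<in> G" for g
    using measurable_compose[OF borel_measurable_Pair[OF measurable_compose[OF T_meas[OF that] q] h] \<Phi>]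
    by simp
  then have "(\<lambda>\<omega>. \<Sum>g\<in>G. \<Phi> (q (T g \<omega>)) (h \<omega>)) \<in> borel_measurable M"
    by (rule borel_measurable_sum)
  then have F_meas: "?F \<in> borel_measurable M" by simp
  have avg_meas: "orbit_average G T (\<lambda>\<omega>. \<Phi> (q \<omega>) (h \<omega>)) \<in> borel_measurable M"
    using integrable_orbit_average[OF G T int] by simp
  show "integrable M ?F"
    using integrable_cong_AE[OF F_meas avg_meas ae] integrable_orbit_average[OF G T int] by simp
  show "integral\<^sup>L M ?F = (\<integral>\<omega>. \<Phi> (q \<omega>) (h \<omega>) \<partial>M)"
    using integral_cong_AE[OF F_meas avg_meas ae] integral_orbit_average[OF G T int] by simp
qed

lemma integral_orbit_average_times_invariant:
  assumes G: "finite G" "G \<noteq> {}" and T: "\<And>g. g \<in> G \<Longrightarrow> measure_preserving M (T g)"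
    and q: "q \<in> borel_measurable M" and h: "h \<in> borel_measurable M"
    and h_inv: "\<And>g. g \<in> G \<Longrightarrow> AE \<omega> in M. h (T g \<omega>) = h \<omega>"
    and int: "integrable M (\<lambda>\<omega>. q \<omega> * h \<omega>)"
  shows "(\<integral>\<omega>. orbit_average G T q \<omega> * h \<omega> \<partial>M) = (\<integral>\<omega>. q \<omega> * h \<omega> \<partial>M)"
proof -
  have \<Phi>: "(\<lambda>(a, b). a * b :: real) \<in> borel_measurable borel"
    unfolding borel_prod[symmetric] by measurable
  show ?thesis
    using integral_orbit_average_invariant[where \<Phi> = "\<lambda>a b. a * b", OF G T \<Phi> q h h_inv int]
    by (simp add: orbit_average_def sum_distrib_right)
qed

lemma AE_orbit_average_eq:
  assumes G: "finite G" "G \<noteq> {}" and f_inv: "\<And>g. g \<in> G \<Longrightarrow> AE \<omega> in M. f (T g \<omega>) = f \<omega>"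
  shows "AE \<omega> in M. orbit_average G T f \<omega> = f \<omega>"
proof -
  have "AE \<omega> in M. \<forall>g\<in>G. f (T g \<omega>) = f \<omega>" by (rule AE_finite_allI[OF G(1) f_inv])
  then show ?thesis
    by eventually_elim (use G in \<open>simp add: orbit_average_def\<close>)
qed

lemma invariant_if_AE_translates_eq:
  assumes G: "finite G" and e: "e \<in> G" "\<And>\<omega>. \<omega> \<in> space M \<Longrightarrow> T e \<omega> = \<omega>"
    and eq: "AE \<omega> in M. \<forall>g\<in>G. q (T g \<omega>) = f \<omega>"
  shows "\<forall>g\<in>G. AE \<omega> in M. q (T g \<omega>) = q \<omega>"
proof -
  have "AE \<omega> in M. \<forall>g\<in>G. q (T g \<omega>) = q \<omega>"
    using eq AE_space by eventually_elim (use e in metis)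
  then show ?thesis by (simp add: AE_ball_countable countable_finite G)
qed

lemma
  fixes M :: "'a measure" and T :: "'g \<Rightarrow> 'a \<Rightarrow> 'a" and p q :: "'a \<Rightarrow> real"
  assumes G: "finite G" "G \<noteq> {}" and T: "\<And>g. g \<in> G \<Longrightarrow> measure_preserving M (T g)"
    and p: "p \<in> borel_measurable M" "\<And>\<omega>. \<omega> \<in> space M \<Longrightarrow> 0 \<le> p \<omega>"
    and p_inv: "\<And>g. g \<in> G \<Longrightarrow> AE \<omega> in M. p (T g \<omega>) = p \<omega>"
    and q: "q \<in> borel_measurable M" "\<And>\<omega>. \<omega> \<in> space M \<Longrightarrow> 0 \<le> q \<omega>"
    and int_q: "integrable M (\<lambda>\<omega>. q \<omega> * ln (q \<omega> / p \<omega>))"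
    and int_qG: "integrable M (\<lambda>\<omega>. orbit_average G T q \<omega> * ln (orbit_average G T q \<omega> / p \<omega>))"
    and supp: "AE \<omega> in M. p \<omega> = 0 \<longrightarrow> orbit_average G T q \<omega> = 0"
    and e: "e \<in> G" "\<And>\<omega>. \<omega> \<in> space M \<Longrightarrow> T e \<omega> = \<omega>"
  shows entropy_orbit_average_le:
      "(\<integral>\<omega>. orbit_average G T q \<omega> * ln (orbit_average G T q \<omega> / p \<omega>) \<partial>M)
         \<le> (\<integral>\<omega>. q \<omega> * ln (q \<omega> / p \<omega>) \<partial>M)"
    and entropy_orbit_average_eq_imp_invariant:
      "(\<integral>\<omega>. orbit_average G T q \<omega> * ln (orbit_average G T q \<omega> / p \<omega>) \<partial>M)
         = (\<integral>\<omega>. q \<omega> * ln (q \<omega> / p \<omega>) \<partial>M)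
       \<Longrightarrow> \<forall>g\<in>G. AE \<omega> in M. q (T g \<omega>) = q \<omega>"
proof -
  let ?qG = "orbit_average G T q"
  let ?F = "\<lambda>\<omega>. (1 / real (card G)) * (\<Sum>g\<in>G. q (T g \<omega>) * ln (q (T g \<omega>) / p \<omega>))"
  let ?D = "\<lambda>\<omega>. ?F \<omega> - ?qG \<omega> * ln (?qG \<omega> / p \<omega>)"
  have \<Phi>: "(\<lambda>(a, b). a * ln (a / b :: real)) \<in> borel_measurable borel"
    unfolding borel_prod[symmetric] by measurable
  note F = integrable_orbit_average_invariant integral_orbit_average_invariant
  note F = F[where \<Phi> = "\<lambda>a b. a * ln (a / b)", OF G T \<Phi> q(1) p(1) p_inv int_q]
  have T_space: "T g \<omega> \<in> space M" if "g \<in> G" "\<omega> \<in> space M" for g \<omega>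
    using T[OF that(1)] that(2) unfolding measure_preserving_def by (blast intro: measurable_space)
  have jensen: "?qG \<omega> * ln (?qG \<omega> / p \<omega>) \<le> ?F \<omega>" if "\<omega> \<in> space M" for \<omega>
    using mult_ln_div_mean_le[OF G, of "\<lambda>g. q (T g \<omega>)" "p \<omega>"] q(2) T_space p(2) that
    unfolding orbit_average_def by simp
  show le: "integral\<^sup>L M (\<lambda>\<omega>. ?qG \<omega> * ln (?qG \<omega> / p \<omega>)) \<le> (\<integral>\<omega>. q \<omega> * ln (q \<omega> / p \<omega>) \<partial>M)"
    using integral_mono[OF int_qG F(1) jensen] F(2) by simp
  assume eq: "integral\<^sup>L M (\<lambda>\<omega>. ?qG \<omega> * ln (?qG \<omega> / p \<omega>)) = (\<integral>\<omega>. q \<omega> * ln (q \<omega> / p \<omega>) \<partial>M)"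
  have D_int: "integrable M ?D" using F(1) int_qG by simp
  have "integral\<^sup>L M ?D = 0" using F eq int_qG by simp
  then have "AE \<omega> in M. ?D \<omega> = 0"
    using integral_nonneg_eq_0_iff_AE[OF D_int] jensen by simp
  then have "AE \<omega> in M. \<forall>g\<in>G. q (T g \<omega>) = ?qG \<omega>"
    using supp AE_space
  proof eventually_elim
    case (elim \<omega>)
    have "\<forall>g\<in>G. q (T g \<omega>) = (1 / real (card G)) * (\<Sum>g\<in>G. q (T g \<omega>))"
    proof (rule mult_ln_div_mean_eq_imp_const[OF G, of "\<lambda>g. q (T g \<omega>)" "p \<omega>"])
      show "\<And>g. g \<in> G \<Longrightarrow> 0 \<le> q (T g \<omega>)" using q(2) T_space elim(3) by blast
    qed (use elim p(2) in \<open>auto simp: orbit_average_def\<close>)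
    then show ?case unfolding orbit_average_def .
  qed
  with G(1) e show "\<forall>g\<in>G. AE \<omega> in M. q (T g \<omega>) = q \<omega>"
    by (rule invariant_if_AE_translates_eq)
qed

lemma ELBO_orbit_average:
  fixes M :: "(coord \<Rightarrow> real) measure" and T :: "'g \<Rightarrow> (coord \<Rightarrow> real) \<Rightarrow> coord \<Rightarrow> real"
  assumes G: "finite G" "G \<noteq> {}" and T: "\<And>g. g \<in> G \<Longrightarrow> measure_preserving M (T g)"
    and e: "e \<in> G" "\<And>\<omega>. \<omega> \<in> space M \<Longrightarrow> T e \<omega> = \<omega>"
    and p: "p \<in> borel_measurable M" "\<And>\<omega>. \<omega> \<in> space M \<Longrightarrow> 0 \<le> p \<omega>"
    and p_inv: "\<And>g. g \<in> G \<Longrightarrow> AE \<omega> in M. p (T g \<omega>) = p \<omega>"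
    and lik: "lik \<in> borel_measurable M"
    and lik_inv: "\<And>g. g \<in> G \<Longrightarrow> AE \<omega> in M. lik (T g \<omega>) = lik \<omega>"
    and q: "q \<in> borel_measurable M" "\<And>\<omega>. \<omega> \<in> space M \<Longrightarrow> 0 \<le> q \<omega>"
    and fin: "finite_terms M lik p q" and finG: "finite_terms M lik p (orbit_average G T q)"
  shows "ELBO M lik p q \<le> ELBO M lik p (orbit_average G T q)
    \<and> (ELBO M lik p (orbit_average G T q) = ELBO M lik p q
         \<longleftrightarrow> (\<forall>g\<in>G. AE \<omega> in M. q (T g \<omega>) = q \<omega>))"
proof -
  let ?qG = "orbit_average G T q"
  have lik_int: "integrable M (\<lambda>\<omega>. q \<omega> * ln (lik \<omega>))"
    and KL_int: "integrable M (\<lambda>\<omega>. q \<omega> * ln (q \<omega> / p \<omega>))"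
    and KL_intG: "integrable M (\<lambda>\<omega>. ?qG \<omega> * ln (?qG \<omega> / p \<omega>))"
    and supp: "AE \<omega> in M. p \<omega> = 0 \<longrightarrow> ?qG \<omega> = 0"
    using fin finG unfolding finite_terms_def by auto
  have "AE \<omega> in M. ln (lik (T g \<omega>)) = ln (lik \<omega>)" if "g \<in> G" for g
    using lik_inv[OF that] by eventually_elim simp
  then have lik_term: "(\<integral>\<omega>. ?qG \<omega> * ln (lik \<omega>) \<partial>M) = (\<integral>\<omega>. q \<omega> * ln (lik \<omega>) \<partial>M)"
    using integral_orbit_average_times_invariant[OF G T q(1) _ _ lik_int] lik by simp
  have KL_le: "KL M ?qG p \<le> KL M q p"
    unfolding KL_def by (rule entropy_orbit_average_le) (fact G T p p_inv q KL_int KL_intG supp e)+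
  have KL_eq: "\<forall>g\<in>G. AE \<omega> in M. q (T g \<omega>) = q \<omega>" if "KL M ?qG p = KL M q p"
    using that unfolding KL_def
    by (rule entropy_orbit_average_eq_imp_invariant[rotated -1]) (fact G T p p_inv q KL_int KL_intG supp e)+
  have "KL M ?qG p = KL M q p" if "\<forall>g\<in>G. AE \<omega> in M. q (T g \<omega>) = q \<omega>"
  proof -
    have "AE \<omega> in M. ?qG \<omega> = q \<omega>" using AE_orbit_average_eq[OF G] that by blast
    then have "AE \<omega> in M. ?qG \<omega> * ln (?qG \<omega> / p \<omega>) = q \<omega> * ln (q \<omega> / p \<omega>)"
      by eventually_elim simp
    then show ?thesis unfolding KL_def using KL_int KL_intG by (intro integral_cong_AE) auto
  qed
  then show ?thesis using lik_term KL_le KL_eq unfolding ELBO_def by auto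
qed

lemma perm_groupD:
  "g \<in> perm_group d L \<Longrightarrow> g l permutes (if 1 \<le> l \<and> l < L then {..<d l} else {})"
  unfolding perm_group_def by blast

lemma perm_group_lessThan: "g \<in> perm_group d L \<Longrightarrow> i < d l \<Longrightarrow> g l i < d l"
  using perm_groupD[of g d L l] permutes_in_image[of "g l"] by (cases "1 \<le> l \<and> l < L") auto

lemma id_in_perm_group: "(\<lambda>l. id) \<in> perm_group d L"
  unfolding perm_group_def by (auto intro: permutes_id)

lemma grp_inv_in_perm_group: "g \<in> perm_group d L \<Longrightarrow> grp_inv g \<in> perm_group d L"
  unfolding perm_group_def grp_inv_def by (blast intro: permutes_inv)

lemma grp_inv_grp_inv: "g \<in> perm_group d L \<Longrightarrow> grp_inv (grp_inv g) = g"
  unfolding grp_inv_def using perm_groupD permutes_inv_inv by fastforce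

lemma finite_perm_group: "finite (perm_group d L)"
proof -
  let ?ext = "\<lambda>f l. if l \<in> {1..<L} then f l else id"
  have "perm_group d L \<subseteq> ?ext ` (\<Pi>\<^sub>E l\<in>{1..<L}. {\<sigma>. \<sigma> permutes {..<d l}})"
  proof
    fix g assume g: "g \<in> perm_group d L"
    have "g l = ?ext (restrict g {1..<L}) l" for l
      using perm_groupD[OF g, of l] by auto
    then have "g = ?ext (restrict g {1..<L})" ..
    moreover have "g l permutes {..<d l}" if "l \<in> {1..<L}" for l
      using perm_groupD[OF g, of l] that by simp
    then have "restrict g {1..<L} \<in> (\<Pi>\<^sub>E l\<in>{1..<L}. {\<sigma>. \<sigma> permutes {..<d l}})"
      by auto
    ultimately show "g \<in> ?ext ` (\<Pi>\<^sub>E l\<in>{1..<L}. {\<sigma>. \<sigma> permutes {..<d l}})" by blast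
  qed
  moreover have "finite (\<Pi>\<^sub>E l\<in>{1..<L}. {\<sigma>. \<sigma> permutes {..<d l}})"
    by (intro finite_PiE finite_permutations) auto
  ultimately show ?thesis by (meson finite_surj)
qed

lemma symmetrize_eq_orbit_average:
  "symmetrize d L q = orbit_average (perm_group d L) (act d L) q"
proof -
  have "bij_betw grp_inv (perm_group d L) (perm_group d L)"
    by (rule bij_betwI[where g = grp_inv]) (auto simp: grp_inv_in_perm_group grp_inv_grp_inv)
  then show ?thesis
    unfolding symmetrize_def orbit_average_def
    by (subst sum.reindex_bij_betw[symmetric, where h = grp_inv]) auto
qed

lemma finite_mlp_coords: "finite (mlp_coords d L)"
proof -
  have "mlp_coords d L \<subseteq> (\<lambda>(l, i, j). Wc l i j) ` (SIGMA l:{..L}. {..<d l} \<times> {..<d (l - 1)})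
      \<union> (\<lambda>(l, i). Bc l i) ` (SIGMA l:{..L}. {..<d l})"
    unfolding mlp_coords_def by force
  then show ?thesis by (rule finite_subset) auto
qed

definition coord_perm :: "(nat \<Rightarrow> nat \<Rightarrow> nat) \<Rightarrow> coord \<Rightarrow> coord" where
  "coord_perm g c = (case c of Wc l i j \<Rightarrow> Wc l (g l i) (g (l - 1) j) | Bc l i \<Rightarrow> Bc l (g l i))"

lemma act_eq_reindex: "act d L g = (\<lambda>\<omega>. \<lambda>c\<in>mlp_coords d L. \<omega> (coord_perm g c))"
  unfolding act_def coord_perm_def by (intro ext restrict_ext) (auto split: coord.split)

lemma bij_betw_coord_perm:
  assumes g: "g \<in> perm_group d L"
  shows "bij_betw (coord_perm g) (mlp_coords d L) (mlp_coords d L)"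
proof -
  have into: "coord_perm g ` mlp_coords d L \<subseteq> mlp_coords d L"
    unfolding mlp_coords_def coord_perm_def using perm_group_lessThan[OF g] by auto
  have "inj (g l)" for l using perm_groupD[OF g] permutes_inj by blast
  then have "inj (coord_perm g)"
    unfolding coord_perm_def by (auto simp: inj_def split: coord.splits)
  then have inj: "inj_on (coord_perm g) (mlp_coords d L)" by (rule inj_on_subset) simp
  then show ?thesis
    using endo_inj_surj[OF finite_mlp_coords into inj] by (simp add: bij_betw_def)
qed

lemma measure_preserving_act:
  "g \<in> perm_group d L \<Longrightarrow> measure_preserving (weight_space d L) (act d L g)"
  unfolding act_eq_reindex weight_space_def
  by (rule measure_preserving_PiM_reindex[OF sigma_finite_lborel finite_mlp_coords bij_betw_coord_perm])

lemma act_id: "\<omega> \<in> space (weight_space d L) \<Longrightarrow> act d L (\<lambda>l. id) \<omega> = \<omega>"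
  unfolding act_eq_reindex coord_perm_def weight_space_def
  by (auto simp: space_PiM PiE_iff extensional_def split: coord.split intro!: ext)

theorem corollary4p2:
  fixes d :: "nat \<Rightarrow> nat" and L :: nat
    and p lik :: "(coord \<Rightarrow> real) \<Rightarrow> real"
    and q :: "'t \<Rightarrow> (coord \<Rightarrow> real) \<Rightarrow> real" and \<theta> :: 't
  assumes L: "1 \<le> L"
    and prior: "is_density (weight_space d L) p" "G_invariant d L p"
    and lik_pos: "\<forall>\<omega>\<in>space (weight_space d L). 0 < lik \<omega>"
    and lik_meas: "lik \<in> borel_measurable (weight_space d L)"
    and lik_inv: "G_invariant d L lik"
    and q_dens: "is_density (weight_space d L) (q \<theta>)"
    and fin: "finite_terms (weight_space d L) lik p (q \<theta>)"
    and finG: "finite_terms (weight_space d L) lik p (symmetrize d L (q \<theta>))"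
  shows "ELBO (weight_space d L) lik p (symmetrize d L (q \<theta>))
           \<ge> ELBO (weight_space d L) lik p (q \<theta>)
    \<and> (ELBO (weight_space d L) lik p (symmetrize d L (q \<theta>))
           = ELBO (weight_space d L) lik p (q \<theta>)
       \<longleftrightarrow> G_invariant d L (q \<theta>))"
proof -
  let ?M = "weight_space d L"
  have "ELBO ?M lik p (q \<theta>) \<le> ELBO ?M lik p (orbit_average (perm_group d L) (act d L) (q \<theta>))
    \<and> (ELBO ?M lik p (orbit_average (perm_group d L) (act d L) (q \<theta>)) = ELBO ?M lik p (q \<theta>)
         \<longleftrightarrow> (\<forall>g\<in>perm_group d L. AE \<omega> in ?M. q \<theta> (act d L g \<omega>) = q \<theta> \<omega>))"
  proof (rule ELBO_orbit_average)
    show "finite (perm_group d L)" "perm_group d L \<noteq> {}"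
      using finite_perm_group[of d L] id_in_perm_group[of d L] by auto
    show "(\<lambda>l. id) \<in> perm_group d L" by (rule id_in_perm_group)
  qed (use prior lik_meas lik_inv q_dens fin finG in \<open>auto simp: is_density_def G_invariant_def
      symmetrize_eq_orbit_average measure_preserving_act act_id\<close>)
  then show ?thesis unfolding symmetrize_eq_orbit_average G_invariant_def .
qed

end
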